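(* Let $k[X,Y]$ be the polynomial ring over a field $k$, let $\ell\ge 3$, and set $R = k[X,Y]/(Y^\ell)$, with $x,y$ the images of $X,Y$ in $R$; let $D = k[x] \subseteq R$. For each integer $n>0$ let $z_n = y/x^n \in \mathrm{Q}(R)$ and $S_n = D[z_n]$. Then $R \subseteq S_n \subseteq \overline R$, and the strict closure $R^*$ of $R$ in $S_n$ equals $$R^* = R + D\frac{y^2}{x^n} + D\frac{y^3}{x^{2n}} + \cdots + D\frac{y^{\ell-1}}{x^{(\ell-2)n}}.$$
   Context: $\mathrm{Q}(R)$ denotes the total ring of fractions of $R$ (here $x$ is a non-zerodivisor of $R$) and $\overline R$ the integral closure of $R$ in $\mathrm{Q}(R)$. For an extension of commutative rings $R \subseteq S$, the strict closure of $R$ in $S$ is $R^* = \{\alpha \in S \mid \alpha\otimes 1 = 1\otimes \alpha \text{ in } S\otimes_R S\}$. *)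

theory Defs
  imports "HOL-Algebra.Ring" "HOL-Computational_Algebra.Polynomial"
          "HOL-Computational_Algebra.Fraction_Field"
begin

text \<open>Model of the total ring of fractions Q(R) of R = k[X,Y]/(Y^l):
  Q(R) = k(x)[y]/(y^l), elements represented by polynomials in y of degree < l
  over the fraction field k(x) = 'k poly fract, multiplication taken mod y^l.\<close>

definition Qring :: "nat \<Rightarrow> ('k::field poly fract poly) ring" where
  "Qring l = \<lparr>carrier = {p. degree p < l},
              monoid.mult = (\<lambda>p q. (p * q) mod monom 1 l),
              monoid.one = 1, ring.zero = 0, ring.add = (+)\<rparr>"

text \<open>The map k[X,Y] \<rightarrow> Q(R). Bivariate polynomials are 'k poly poly:
  outer variable Y, inner variable X.\<close>
definition embR :: "nat \<Rightarrow> 'k::field poly poly \<Rightarrow> 'k poly fract poly" where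
  "embR l P = map_poly (\<lambda>c. Fract c 1) P mod monom 1 l"

definition Rsub :: "nat \<Rightarrow> 'k::field poly fract poly set" where
  "Rsub l = range (embR l)"

definition xQ :: "nat \<Rightarrow> 'k::field poly fract poly" where
  "xQ l = embR l [:[:0, 1:]:]"

definition yQ :: "nat \<Rightarrow> 'k::field poly fract poly" where
  "yQ l = embR l [:0, 1:]"

definition Dsub :: "nat \<Rightarrow> 'k::field poly fract poly set" where
  "Dsub l = embR l ` {[:c:] | c. True}"

definition zQ :: "nat \<Rightarrow> nat \<Rightarrow> 'k::field poly fract poly" where
  "zQ l n = yQ l \<otimes>\<^bsub>Qring l\<^esub> inv\<^bsub>Qring l\<^esub> (xQ l [^]\<^bsub>Qring l\<^esub> n)"

definition Salg :: "nat \<Rightarrow> nat \<Rightarrow> 'k::field poly fract poly set" where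
  "Salg l n = {finsum (Qring l) (\<lambda>i. d i \<otimes>\<^bsub>Qring l\<^esub> (zQ l n [^]\<^bsub>Qring l\<^esub> (i::nat))) {..(m::nat)}
               | m d. \<forall>i. d i \<in> Dsub l}"

definition integral_closure :: "('a, 'b) ring_scheme \<Rightarrow> 'a set \<Rightarrow> 'a set" where
  "integral_closure A R = {a \<in> carrier A. \<exists>m c. (\<forall>i<m. c i \<in> R) \<and>
      a [^]\<^bsub>A\<^esub> m \<oplus>\<^bsub>A\<^esub> finsum A (\<lambda>i. c i \<otimes>\<^bsub>A\<^esub> (a [^]\<^bsub>A\<^esub> (i::nat))) {..<m} = \<zero>\<^bsub>A\<^esub>}"

text \<open>Tensor product S \<otimes>_R S (R \<subseteq> S subrings of A) by the standard construction:
  free abelian group on S \<times> S modulo the subgroup generated by the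
  bilinearity and R-balancedness relations.\<close>
definition tdelta :: "'a \<times> 'a \<Rightarrow> ('a \<times> 'a \<Rightarrow> int)" where
  "tdelta p = (\<lambda>q. if q = p then 1 else 0)"

definition fadd :: "('c \<Rightarrow> int) \<Rightarrow> ('c \<Rightarrow> int) \<Rightarrow> ('c \<Rightarrow> int)" where
  "fadd f g = (\<lambda>q. f q + g q)"

definition fsub :: "('c \<Rightarrow> int) \<Rightarrow> ('c \<Rightarrow> int) \<Rightarrow> ('c \<Rightarrow> int)" where
  "fsub f g = (\<lambda>q. f q - g q)"

inductive_set tensor_rels :: "('a, 'b) ring_scheme \<Rightarrow> 'a set \<Rightarrow> 'a set \<Rightarrow> ('a \<times> 'a \<Rightarrow> int) set"
  for A R S where
  zero: "(\<lambda>_. 0) \<in> tensor_rels A R S"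
| add: "f \<in> tensor_rels A R S \<Longrightarrow> g \<in> tensor_rels A R S \<Longrightarrow> fadd f g \<in> tensor_rels A R S"
| neg: "f \<in> tensor_rels A R S \<Longrightarrow> (\<lambda>q. - f q) \<in> tensor_rels A R S"
| addL: "s \<in> S \<Longrightarrow> s' \<in> S \<Longrightarrow> t \<in> S \<Longrightarrow>
     fsub (fsub (tdelta (s \<oplus>\<^bsub>A\<^esub> s', t)) (tdelta (s, t))) (tdelta (s', t)) \<in> tensor_rels A R S"
| addR: "s \<in> S \<Longrightarrow> t \<in> S \<Longrightarrow> t' \<in> S \<Longrightarrow>
     fsub (fsub (tdelta (s, t \<oplus>\<^bsub>A\<^esub> t')) (tdelta (s, t))) (tdelta (s, t')) \<in> tensor_rels A R S"
| scal: "r \<in> R \<Longrightarrow> s \<in> S \<Longrightarrow> t \<in> S \<Longrightarrow>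
     fsub (tdelta (r \<otimes>\<^bsub>A\<^esub> s, t)) (tdelta (s, r \<otimes>\<^bsub>A\<^esub> t)) \<in> tensor_rels A R S"

definition strict_closure :: "('a, 'b) ring_scheme \<Rightarrow> 'a set \<Rightarrow> 'a set \<Rightarrow> 'a set" where
  "strict_closure A R S = {\<alpha> \<in> S. fsub (tdelta (\<alpha>, \<one>\<^bsub>A\<^esub>)) (tdelta (\<one>\<^bsub>A\<^esub>, \<alpha>)) \<in> tensor_rels A R S}"

end

theory Submission
  imports Defs
begin

(*
  Write an element of Q(R) = k(x)[y]/(y^l) as a_0 + a_1 y + ... + a_(l-1) y^(l-1) with a_j in k(x).
  Then R, S_n and the right-hand side T of the formula are described by the denominators allowed
  in a_j: a_j, x^(nj) a_j and x^((j-1)n) a_j lie in k[x] respectively.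

  Every a in S_n is integral over R, since a - a_0 is divisible by y and so (a - a_0)^l = 0.

  T lies in the strict closure: with z = y/x^n we have c y^j/x^((j-1)n) = (x^n c) z^j, and since
  both x^n and y = x^n z lie in R, the R-balancing relations move the factors z across the tensor
  sign one at a time: x^n c z^j \<otimes> 1 = x^n c \<otimes> z^j = 1 \<otimes> x^n c z^j.

  Conversely, for j >= 1 the map (s, t) |-> x^((j-1)n) s_j t_0 on S_n x S_n is biadditive and
  R-balanced modulo k[x]: the j-th coefficient of r s differs from r_0 s_j only by terms r_i s_(j-i)
  with i >= 1, and r_i in k[x] makes up for the missing factor x^n in the denominator. So it induces
  a map S_n \<otimes>_R S_n -> k(x)/k[x], which sends a \<otimes> 1 - 1 \<otimes> a to x^((j-1)n) a_j.
*)

section \<open>Strict closure in a commutative ring\<close>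

definition tensor_eq :: "('a, 'b) ring_scheme \<Rightarrow> 'a set \<Rightarrow> 'a set \<Rightarrow>
    ('a \<times> 'a \<Rightarrow> int) \<Rightarrow> ('a \<times> 'a \<Rightarrow> int) \<Rightarrow> bool" where
  "tensor_eq A R S f g \<longleftrightarrow> fsub f g \<in> tensor_rels A R S"

lemma tensor_eq_refl: "tensor_eq A R S f f"
  using tensor_rels.zero by (simp add: tensor_eq_def fsub_def)

lemma tensor_eq_sym: "tensor_eq A R S f g \<Longrightarrow> tensor_eq A R S g f"
  using tensor_rels.neg[of "fsub f g"] by (simp add: tensor_eq_def fsub_def)

lemma tensor_eq_trans [trans]:
  "tensor_eq A R S f g \<Longrightarrow> tensor_eq A R S g h \<Longrightarrow> tensor_eq A R S f h"
  using tensor_rels.add[of "fsub f g" A R S "fsub g h"] by (simp add: tensor_eq_def fsub_def fadd_def)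

lemma tensor_eq_fadd:
  "tensor_eq A R S f f' \<Longrightarrow> tensor_eq A R S g g' \<Longrightarrow> tensor_eq A R S (fadd f g) (fadd f' g')"
  using tensor_rels.add[of "fsub f f'" A R S "fsub g g'"]
  by (simp add: tensor_eq_def fsub_def fadd_def algebra_simps)

lemma tensor_eq_addL:
  "s \<in> S \<Longrightarrow> s' \<in> S \<Longrightarrow> t \<in> S \<Longrightarrow>
    tensor_eq A R S (tdelta (s \<oplus>\<^bsub>A\<^esub> s', t)) (fadd (tdelta (s, t)) (tdelta (s', t)))"
  using tensor_rels.addL[of s S s' t A R] by (simp add: tensor_eq_def fsub_def fadd_def diff_diff_eq)

lemma tensor_eq_addR:
  "s \<in> S \<Longrightarrow> t \<in> S \<Longrightarrow> t' \<in> S \<Longrightarrow>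
    tensor_eq A R S (tdelta (s, t \<oplus>\<^bsub>A\<^esub> t')) (fadd (tdelta (s, t)) (tdelta (s, t')))"
  using tensor_rels.addR[of s S t t' A R] by (simp add: tensor_eq_def fsub_def fadd_def diff_diff_eq)

lemma tensor_eq_scal:
  "r \<in> R \<Longrightarrow> s \<in> S \<Longrightarrow> t \<in> S \<Longrightarrow>
    tensor_eq A R S (tdelta (r \<otimes>\<^bsub>A\<^esub> s, t)) (tdelta (s, r \<otimes>\<^bsub>A\<^esub> t))"
  unfolding tensor_eq_def by (rule tensor_rels.scal)

lemma strict_closure_iff:
  "\<alpha> \<in> strict_closure A R S \<longleftrightarrow>
    \<alpha> \<in> S \<and> tensor_eq A R S (tdelta (\<alpha>, \<one>\<^bsub>A\<^esub>)) (tdelta (\<one>\<^bsub>A\<^esub>, \<alpha>))"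
  by (simp add: strict_closure_def tensor_eq_def)

lemma base_in_strict_closure:
  assumes "r \<in> R" "r \<in> S" "\<one>\<^bsub>A\<^esub> \<in> S" "r \<otimes>\<^bsub>A\<^esub> \<one>\<^bsub>A\<^esub> = r"
  shows "r \<in> strict_closure A R S"
  using tensor_eq_scal[of r R "\<one>\<^bsub>A\<^esub>" S "\<one>\<^bsub>A\<^esub>" A] assms by (simp add: strict_closure_iff)

lemma strict_closure_add:
  assumes x: "x \<in> strict_closure A R S" and y: "y \<in> strict_closure A R S"
    and "x \<oplus>\<^bsub>A\<^esub> y \<in> S" "\<one>\<^bsub>A\<^esub> \<in> S"
  shows "x \<oplus>\<^bsub>A\<^esub> y \<in> strict_closure A R S"
proof -
  have S: "x \<in> S" "y \<in> S" "\<one>\<^bsub>A\<^esub> \<in> S" using x y assms(4) by (simp_all add: strict_closure_iff)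
  have "tensor_eq A R S (tdelta (x \<oplus>\<^bsub>A\<^esub> y, \<one>\<^bsub>A\<^esub>))
      (fadd (tdelta (x, \<one>\<^bsub>A\<^esub>)) (tdelta (y, \<one>\<^bsub>A\<^esub>)))"
    using S by (rule tensor_eq_addL)
  also have "tensor_eq A R S \<dots> (fadd (tdelta (\<one>\<^bsub>A\<^esub>, x)) (tdelta (\<one>\<^bsub>A\<^esub>, y)))"
    using x y by (intro tensor_eq_fadd) (simp_all add: strict_closure_iff)
  also have "tensor_eq A R S \<dots> (tdelta (\<one>\<^bsub>A\<^esub>, x \<oplus>\<^bsub>A\<^esub> y))"
    using S by (intro tensor_eq_sym[OF tensor_eq_addR])
  finally show ?thesis using assms(3) by (simp add: strict_closure_iff)
qed

lemma factor_pow_in_strict_closure: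
  fixes A (structure) and j :: nat
  assumes "cring A" and RS: "R \<subseteq> S" "S \<subseteq> carrier A" "\<one> \<in> S"
    and S_mult: "\<And>s s'. s \<in> S \<Longrightarrow> s' \<in> S \<Longrightarrow> s \<otimes> s' \<in> S"
    and t: "t \<in> R" and a: "a \<in> S" "t \<otimes> a \<in> R" and z: "z \<in> S" "t \<otimes> z \<in> R"
  shows "t \<otimes> a \<otimes> z [^] j \<in> strict_closure A R S"
proof -
  interpret cring A by fact
  have zpow: "z [^] k \<in> S" for k :: nat
    by (induction k) (simp_all add: RS(3) S_mult z(1))
  have car: "t \<in> carrier A" "a \<in> carrier A" "z \<in> carrier A" using RS t a z by auto
  have chain: "tensor_eq A R S (tdelta (t \<otimes> a \<otimes> z [^] i, z [^] k)) (tdelta (t \<otimes> a, z [^] (i + k)))"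
    for i k :: nat
  proof (induction i arbitrary: k)
    case 0
    show ?case using car by (simp add: tensor_eq_refl)
  next
    case (Suc i)
    have e: "(t \<otimes> z) \<otimes> (a \<otimes> z [^] i) = t \<otimes> a \<otimes> z [^] Suc i"
      "(t \<otimes> z) \<otimes> z [^] k = t \<otimes> z [^] Suc k"
      "t \<otimes> (a \<otimes> z [^] i) = t \<otimes> a \<otimes> z [^] i"
      using car by (simp_all add: nat_pow_Suc2 m_ac)
    have "tensor_eq A R S (tdelta (t \<otimes> a \<otimes> z [^] Suc i, z [^] k))
        (tdelta (a \<otimes> z [^] i, t \<otimes> z [^] Suc k))"
      using tensor_eq_scal[where A = A, OF z(2) S_mult[OF a(1) zpow[of i]] zpow[of k]] unfolding e .
    also have "tensor_eq A R S \<dots> (tdelta (t \<otimes> a \<otimes> z [^] i, z [^] Suc k))"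
      using tensor_eq_sym[OF tensor_eq_scal[where A = A, OF t S_mult[OF a(1) zpow[of i]] zpow[of "Suc k"]]]
      unfolding e .
    also have "tensor_eq A R S \<dots> (tdelta (t \<otimes> a, z [^] (i + Suc k)))"
      by (rule Suc.IH)
    finally show ?case by simp
  qed
  have "tensor_eq A R S (tdelta (t \<otimes> a \<otimes> z [^] j, \<one>)) (tdelta (t \<otimes> a, z [^] j))"
    using chain[of j 0] by simp
  also have "tensor_eq A R S \<dots> (tdelta (\<one>, t \<otimes> a \<otimes> z [^] j))"
    using tensor_eq_scal[where A = A, OF a(2) RS(3) zpow[of j]] car by simp
  finally have "tensor_eq A R S (tdelta (t \<otimes> a \<otimes> z [^] j, \<one>)) (tdelta (\<one>, t \<otimes> a \<otimes> z [^] j))" .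
  moreover have "t \<otimes> a \<otimes> z [^] j \<in> S"
    using S_mult[OF _ zpow] RS(1) a(2) by blast
  ultimately show ?thesis by (simp add: strict_closure_iff)
qed

definition tensor_lift :: "('a \<times> 'a \<Rightarrow> 'g::ring_1) \<Rightarrow> ('a \<times> 'a \<Rightarrow> int) \<Rightarrow> 'g" where
  "tensor_lift \<Phi> f = (\<Sum>q | f q \<noteq> 0. of_int (f q) * \<Phi> q)"

lemma tensor_lift_eq_sum:
  assumes "finite U" "{q. f q \<noteq> 0} \<subseteq> U"
  shows "tensor_lift \<Phi> f = (\<Sum>q\<in>U. of_int (f q) * \<Phi> q)"
  unfolding tensor_lift_def by (rule sum.mono_neutral_left) (use assms in auto)

lemma tensor_lift_tdelta: "tensor_lift \<Phi> (tdelta p) = \<Phi> p"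
  by (simp add: tensor_lift_eq_sum[of "{p}"] tdelta_def)

lemma tensor_lift_uminus: "tensor_lift \<Phi> (\<lambda>q. - f q) = - tensor_lift \<Phi> f"
  by (simp add: tensor_lift_def sum_negf)

lemma tensor_lift_fadd:
  assumes "finite {q. f q \<noteq> 0}" "finite {q. g q \<noteq> 0}"
  shows "tensor_lift \<Phi> (fadd f g) = tensor_lift \<Phi> f + tensor_lift \<Phi> g"
proof -
  let ?U = "{q. f q \<noteq> 0} \<union> {q. g q \<noteq> 0}"
  have "finite ?U" using assms by simp
  moreover have "{q. fadd f g q \<noteq> 0} \<subseteq> ?U" by (auto simp: fadd_def)
  ultimately show ?thesis
    by (simp add: tensor_lift_eq_sum[of ?U] fadd_def distrib_right sum.distrib)
qed

lemma tensor_lift_fsub: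
  assumes "finite {q. f q \<noteq> 0}" "finite {q. g q \<noteq> 0}"
  shows "tensor_lift \<Phi> (fsub f g) = tensor_lift \<Phi> f - tensor_lift \<Phi> g"
proof -
  have "fsub f g = fadd f (\<lambda>q. - g q)" by (simp add: fsub_def fadd_def)
  then show ?thesis using assms by (simp add: tensor_lift_fadd tensor_lift_uminus)
qed

lemma finite_support_fsub:
  "finite {q. f q \<noteq> 0} \<Longrightarrow> finite {q. g q \<noteq> 0} \<Longrightarrow> finite {q. fsub f g q \<noteq> 0}"
  by (rule finite_subset[of _ "{q. f q \<noteq> 0} \<union> {q. g q \<noteq> 0}"]) (auto simp: fsub_def)

lemma finite_support_tdelta: "finite {q. tdelta p q \<noteq> 0}"
  by (simp add: tdelta_def)

lemma finite_support_fsub_tdelta: "finite {q. fsub (tdelta p) (tdelta p') q \<noteq> 0}"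
  by (intro finite_support_fsub finite_support_tdelta)

lemma tensor_lift_fsub_tdelta: "tensor_lift \<Phi> (fsub (tdelta p) (tdelta p')) = \<Phi> p - \<Phi> p'"
  by (simp only: tensor_lift_fsub finite_support_tdelta tensor_lift_tdelta)

text \<open>Such a \<open>\<Phi>\<close> induces, via \<open>tensor_lift\<close>, a homomorphism \<open>S \<otimes>\<^sub>R S \<rightarrow> 'g / I\<close>.\<close>

locale balanced_modulo =
  fixes A :: "('a, 'b) ring_scheme" and R S :: "'a set"
    and \<Phi> :: "'a \<times> 'a \<Rightarrow> 'g::ring_1" and I :: "'g set"
  assumes zero_mem: "0 \<in> I"
    and add_mem: "\<And>u v. u \<in> I \<Longrightarrow> v \<in> I \<Longrightarrow> u + v \<in> I"
    and uminus_mem: "\<And>u. u \<in> I \<Longrightarrow> - u \<in> I"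
    and additive_left:
      "\<And>s s' t. s \<in> S \<Longrightarrow> s' \<in> S \<Longrightarrow> t \<in> S \<Longrightarrow> \<Phi> (s \<oplus>\<^bsub>A\<^esub> s', t) = \<Phi> (s, t) + \<Phi> (s', t)"
    and additive_right:
      "\<And>s t t'. s \<in> S \<Longrightarrow> t \<in> S \<Longrightarrow> t' \<in> S \<Longrightarrow> \<Phi> (s, t \<oplus>\<^bsub>A\<^esub> t') = \<Phi> (s, t) + \<Phi> (s, t')"
    and balanced:
      "\<And>r s t. r \<in> R \<Longrightarrow> s \<in> S \<Longrightarrow> t \<in> S \<Longrightarrow> \<Phi> (r \<otimes>\<^bsub>A\<^esub> s, t) - \<Phi> (s, r \<otimes>\<^bsub>A\<^esub> t) \<in> I"
begin

lemma tensor_rels_lift_mem: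
  assumes "f \<in> tensor_rels A R S"
  shows "finite {q. f q \<noteq> 0} \<and> tensor_lift \<Phi> f \<in> I"
  using assms
proof induction
  case zero
  show ?case by (simp add: tensor_lift_def zero_mem)
next
  case (add f g)
  have "finite {q. fadd f g q \<noteq> 0}"
    by (rule finite_subset[of _ "{q. f q \<noteq> 0} \<union> {q. g q \<noteq> 0}"]) (use add.IH in \<open>auto simp: fadd_def\<close>)
  then show ?case using add.IH by (simp add: tensor_lift_fadd add_mem)
next
  case (neg f)
  then show ?case by (simp add: tensor_lift_uminus uminus_mem)
next
  case (addL s s' t)
  have "tensor_lift \<Phi> (fsub (fsub (tdelta (s \<oplus>\<^bsub>A\<^esub> s', t)) (tdelta (s, t))) (tdelta (s', t))) = 0"
    using addL by (simp only: tensor_lift_fsub finite_support_fsub_tdelta finite_support_tdelta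
        tensor_lift_fsub_tdelta tensor_lift_tdelta additive_left) simp
  then show ?case using finite_support_fsub[OF finite_support_fsub_tdelta finite_support_tdelta] zero_mem
    by simp
next
  case (addR s t t')
  have "tensor_lift \<Phi> (fsub (fsub (tdelta (s, t \<oplus>\<^bsub>A\<^esub> t')) (tdelta (s, t))) (tdelta (s, t'))) = 0"
    using addR by (simp only: tensor_lift_fsub finite_support_fsub_tdelta finite_support_tdelta
        tensor_lift_fsub_tdelta tensor_lift_tdelta additive_right) simp
  then show ?case using finite_support_fsub[OF finite_support_fsub_tdelta finite_support_tdelta] zero_mem
    by simp
next
  case (scal r s t)
  show ?case
    unfolding tensor_lift_fsub_tdelta using finite_support_fsub_tdelta balanced[OF scal] by (rule conjI)
qed

lemma strict_closure_lift_mem: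
  assumes "\<alpha> \<in> strict_closure A R S"
  shows "\<Phi> (\<alpha>, \<one>\<^bsub>A\<^esub>) - \<Phi> (\<one>\<^bsub>A\<^esub>, \<alpha>) \<in> I"
proof -
  have "fsub (tdelta (\<alpha>, \<one>\<^bsub>A\<^esub>)) (tdelta (\<one>\<^bsub>A\<^esub>, \<alpha>)) \<in> tensor_rels A R S"
    using assms by (simp add: strict_closure_def)
  from tensor_rels_lift_mem[OF this] show ?thesis
    unfolding tensor_lift_fsub_tdelta by (rule conjunct2)
qed

end

section \<open>Polynomials truncated at degree l\<close>

lemma coeff_mod_monom:
  "coeff (p mod monom (1::'a::field) l) j = (if j < l then coeff p j else 0)"
proof (cases "j < l")
  case True
  have "coeff p j = coeff (p div monom 1 l * monom 1 l + p mod monom 1 l) j"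
    by (simp only: div_mult_mod_eq)
  also have "\<dots> = coeff (p mod monom 1 l) j"
    unfolding coeff_add using True by (simp add: mult.commute[of _ "monom 1 l"] coeff_monom_mult)
  finally show ?thesis using True by simp
next
  case False
  have "p mod monom 1 l = 0 \<or> degree (p mod monom 1 l) < l"
    using degree_mod_less[of "monom (1::'a) l" p] by (simp add: degree_monom_eq)
  then show ?thesis using False by (auto intro: coeff_eq_0)
qed

lemma mod_monom_monom:
  "monom a i mod monom (1::'a::field) l = (if i < l then monom a i else 0)"
  by (rule poly_eqI) (simp add: coeff_mod_monom)

lemma degree_mod_monom_less: "0 < l \<Longrightarrow> degree (p mod monom (1::'a::field) l) < l"
  using degree_mod_less[of "monom (1::'a) l" p] by (auto simp: degree_monom_eq)

lemma mod_monom_eq_self: "degree p < l \<Longrightarrow> p mod monom (1::'a::field) l = p"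
  by (rule mod_poly_less) (simp add: degree_monom_eq)

lemma power_mod_monom_eq_0:
  assumes "coeff q 0 = 0" shows "q ^ l mod monom (1::'a::field) l = 0"
proof -
  obtain q' where "q = pCons 0 q'"
    using assms by (cases q) simp
  then have "q = monom 1 1 * q'"
    by (simp add: monom_Suc monom_0)
  then have "q ^ l = monom 1 l * q' ^ l"
    by (simp add: power_mult_distrib monom_power)
  then show ?thesis by simp
qed

lemma degree_less_iff_coeff_eq_0:
  "0 < l \<Longrightarrow> degree p < l \<longleftrightarrow> (\<forall>j\<ge>l. coeff p j = 0)"
proof
  assume "degree p < l"
  then show "\<forall>j\<ge>l. coeff p j = 0" by (auto intro: coeff_eq_0)
next
  assume "0 < l" "\<forall>j\<ge>l. coeff p j = 0"
  then have "degree p \<le> l - 1" by (intro degree_le) auto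
  then show "degree p < l" using \<open>0 < l\<close> by simp
qed

lemma coeff_sum_monom:
  "finite A \<Longrightarrow> coeff (\<Sum>i\<in>A. monom (b i) i) j = (if j \<in> A then b j else 0)"
  by (simp add: coeff_sum)

lemma degree_monom_less: "i < l \<Longrightarrow> degree (monom c i) < l"
  using degree_monom_le[of c i] by linarith

lemma poly_mod_sum: "(\<Sum>i\<in>A. f i) mod (m::'a::field poly) = (\<Sum>i\<in>A. f i mod m)"
  by (induction A rule: infinite_finite_induct) (simp_all add: poly_mod_add_left)

lemma Qring_simps:
  "carrier (Qring l) = {p. degree p < l}"
  "p \<otimes>\<^bsub>Qring l\<^esub> q = (p * q) mod monom 1 l"
  "p \<oplus>\<^bsub>Qring l\<^esub> q = p + q"
  "\<one>\<^bsub>Qring l\<^esub> = 1"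
  "\<zero>\<^bsub>Qring l\<^esub> = 0"
  by (simp_all add: Qring_def)

lemma Qring_cring: "0 < l \<Longrightarrow> cring (Qring l :: 'a::field poly fract poly ring)"
proof (rule cringI)
  assume l: "0 < l"
  show "abelian_group (Qring l :: 'a poly fract poly ring)"
    by (rule abelian_groupI) (auto simp: Qring_simps l degree_add_less intro: exI[of _ "- x" for x])
  show "comm_monoid (Qring l :: 'a poly fract poly ring)"
    by (rule comm_monoidI)
      (auto simp: Qring_simps l degree_mod_monom_less mod_monom_eq_self mod_mult_left_eq
        mod_mult_right_eq mult_ac)
  show "(x \<oplus>\<^bsub>Qring l\<^esub> y) \<otimes>\<^bsub>Qring l\<^esub> z = x \<otimes>\<^bsub>Qring l\<^esub> z \<oplus>\<^bsub>Qring l\<^esub> y \<otimes>\<^bsub>Qring l\<^esub> z"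
    for x y z :: "'a poly fract poly"
    by (simp add: Qring_simps distrib_right poly_mod_add_left)
qed

lemma finsum_Qring:
  assumes "0 < l" "\<And>i. i \<in> A \<Longrightarrow> degree (f i) < l"
  shows "finsum (Qring l) f A = sum f A"
proof (cases "finite A")
  case True
  interpret cring "Qring l" by (rule Qring_cring) fact
  show ?thesis using True assms(2)
    by (induction A rule: finite_induct) (auto simp: Qring_simps finsum_insert)
next
  case False
  then show ?thesis by (simp add: finsum_def finprod_def Qring_simps)
qed

lemma pow_Qring: "0 < l \<Longrightarrow> p [^]\<^bsub>Qring l\<^esub> (k::nat) = p ^ k mod monom 1 l"
  by (induction k)
    (simp_all add: Qring_simps mod_monom_eq_self mod_mult_left_eq mod_mult_right_eq mult.commute)

lemma mult_monom_Qring: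
  "monom a i \<otimes>\<^bsub>Qring l\<^esub> monom b k = (if i + k < l then monom (a * b) (i + k) else 0)"
  by (simp add: Qring_simps mult_monom mod_monom_monom)

lemma pow_monom_Qring:
  "0 < l \<Longrightarrow> monom a i [^]\<^bsub>Qring l\<^esub> (k::nat) = (if i * k < l then monom (a ^ k) (i * k) else 0)"
  by (simp add: pow_Qring monom_power mod_monom_monom)

lemma inv_const_Qring:
  assumes "0 < l" "u \<noteq> 0" shows "inv\<^bsub>Qring l\<^esub> [:u:] = [:inverse u:]"
proof -
  interpret cring "Qring l" by (rule Qring_cring) fact
  have "[:u:] * [:inverse u:] = 1" using assms(2) by (simp add: one_pCons)
  then show ?thesis
    using assms by (intro comm_inv_char) (simp_all add: Qring_simps mod_monom_eq_self)
qed

section \<open>The rings R and S_n inside Q(R)\<close>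

definition Xfrac :: "'a::field poly fract" where
  "Xfrac = Fract [:0, 1:] 1"

definition Polys :: "'a::field poly fract set" where
  "Polys = range (\<lambda>c. Fract c 1)"

lemma Fract_in_Polys [simp]: "Fract c 1 \<in> Polys"
  by (simp add: Polys_def)

lemma zero_in_Polys [simp]: "0 \<in> Polys"
  by (simp add: Zero_fract_def)

lemma one_in_Polys [simp]: "1 \<in> Polys"
  by (simp add: One_fract_def)

lemma Xfrac_in_Polys [simp]: "Xfrac \<in> Polys"
  by (simp add: Xfrac_def)

lemma Polys_add [simp]: "u \<in> Polys \<Longrightarrow> v \<in> Polys \<Longrightarrow> u + v \<in> Polys"
  by (auto simp: Polys_def)

lemma Polys_mult [simp]: "u \<in> Polys \<Longrightarrow> v \<in> Polys \<Longrightarrow> u * v \<in> Polys"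
  by (auto simp: Polys_def)

lemma Polys_uminus [simp]: "u \<in> Polys \<Longrightarrow> - u \<in> Polys"
  by (auto simp: Polys_def)

lemma Polys_power [simp]: "u \<in> Polys \<Longrightarrow> u ^ k \<in> Polys"
  by (induction k) auto

lemma Polys_sum [intro]: "(\<And>i. i \<in> A \<Longrightarrow> f i \<in> Polys) \<Longrightarrow> sum f A \<in> Polys"
  by (induction A rule: infinite_finite_induct) auto

lemma of_nat_in_Polys [simp]: "of_nat k \<in> Polys"
  by (simp add: of_nat_fract)

lemma Xfrac_nonzero [simp]: "Xfrac \<noteq> 0"
  by (simp add: Xfrac_def Zero_fract_def eq_fract)

lemma Xfrac_power_inverse [simp]: "Xfrac ^ k * inverse Xfrac ^ k = 1"
  by (simp add: field_simps)

lemma Xfrac_power_cancel [simp]: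
  "Xfrac ^ k * u * inverse Xfrac ^ k = u"
  "Xfrac ^ k * (u * inverse Xfrac ^ k) = u"
  by (simp_all add: field_simps)

text \<open>Note that \<open>(j - 1) * n = 0\<close>
  for \<open>j = 0\<close> as well as for \<open>j = 1\<close>.\<close>

definition R_set :: "nat \<Rightarrow> 'a::field poly fract poly set" where
  "R_set l = {p. degree p < l \<and> (\<forall>j. coeff p j \<in> Polys)}"

definition S_set :: "nat \<Rightarrow> nat \<Rightarrow> 'a::field poly fract poly set" where
  "S_set l n = {p. degree p < l \<and> (\<forall>j. Xfrac ^ (n * j) * coeff p j \<in> Polys)}"

definition T_set :: "nat \<Rightarrow> nat \<Rightarrow> 'a::field poly fract poly set" where
  "T_set l n = {p. degree p < l \<and> (\<forall>j. Xfrac ^ ((j - 1) * n) * coeff p j \<in> Polys)}"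

lemma const_in_R_set: "0 < l \<Longrightarrow> u \<in> Polys \<Longrightarrow> [:u:] \<in> R_set l"
  by (simp add: R_set_def coeff_pCons split: nat.split)

lemma S_set_coeff_0: assumes "p \<in> S_set l n" shows "coeff p 0 \<in> Polys"
proof -
  have "Xfrac ^ (n * 0) * coeff p 0 \<in> Polys" using assms unfolding S_set_def by blast
  then show ?thesis by simp
qed

lemma R_set_subset_S_set: "R_set l \<subseteq> S_set l n"
  by (auto simp: R_set_def S_set_def)

lemma S_set_subset_carrier: "S_set l n \<subseteq> carrier (Qring l)"
  by (auto simp: S_set_def Qring_simps)

lemma one_in_S_set: "0 < l \<Longrightarrow> 1 \<in> S_set l n"
  by (simp add: S_set_def)

lemma S_set_add: "p \<in> S_set l n \<Longrightarrow> q \<in> S_set l n \<Longrightarrow> p + q \<in> S_set l n"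
  by (auto simp: S_set_def distrib_left degree_add_less)

lemma S_set_mult:
  assumes l: "0 < l" and p: "p \<in> S_set l n" and q: "q \<in> S_set l n"
  shows "(p * q) mod monom 1 l \<in> S_set l n"
proof -
  have "Xfrac ^ (n * j) * coeff (p * q) j \<in> Polys" for j
  proof -
    have "Xfrac ^ (n * j) * coeff (p * q) j =
        (\<Sum>i\<le>j. (Xfrac ^ (n * i) * coeff p i) * (Xfrac ^ (n * (j - i)) * coeff q (j - i)))"
      unfolding coeff_mult sum_distrib_left
    proof (rule sum.cong)
      fix i assume "i \<in> {..j}"
      then have "Xfrac ^ (n * j) = (Xfrac :: 'a poly fract) ^ (n * i) * Xfrac ^ (n * (j - i))"
        by (simp flip: power_add add: diff_mult_distrib2)
      then show "Xfrac ^ (n * j) * (coeff p i * coeff q (j - i)) =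
          (Xfrac ^ (n * i) * coeff p i) * (Xfrac ^ (n * (j - i)) * coeff q (j - i))"
        by (simp add: mult_ac)
    qed simp
    then show ?thesis using p q by (auto simp: S_set_def)
  qed
  then show ?thesis using l by (simp add: S_set_def degree_mod_monom_less coeff_mod_monom)
qed

lemma coeff_embR: "coeff (embR l P) j = (if j < l then Fract (coeff P j) 1 else 0)"
  by (simp add: embR_def coeff_mod_monom coeff_map_poly Zero_fract_def)

lemma degree_embR: "0 < l \<Longrightarrow> degree (embR l P) < l"
  by (simp add: embR_def degree_mod_monom_less)

lemma Rsub_eq: assumes l: "0 < l" shows "Rsub l = R_set l"
proof
  show "Rsub l \<subseteq> R_set l"
    using l by (auto simp: Rsub_def R_set_def degree_embR coeff_embR)
next
  show "R_set l \<subseteq> Rsub l"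
  proof
    fix p assume p: "p \<in> R_set l"
    then obtain c where c: "\<And>j. coeff p j = Fract (c j) 1"
      by (simp add: R_set_def Polys_def image_iff) metis
    have "embR l (\<Sum>j<l. monom (c j) j) = p"
      using p l by (intro poly_eqI) (auto simp: coeff_embR coeff_sum_monom c R_set_def
          degree_less_iff_coeff_eq_0)
    then show "p \<in> Rsub l" by (auto simp: Rsub_def)
  qed
qed

lemma embR_const: "0 < l \<Longrightarrow> embR l [:c:] = [:Fract c 1:]"
  by (rule poly_eqI) (simp add: coeff_embR coeff_pCons Zero_fract_def split: nat.split)

lemma Dsub_eq: "0 < l \<Longrightarrow> Dsub l = {[:u:] | u. u \<in> Polys}"
  unfolding Dsub_def Polys_def by (force simp: embR_const)

lemma xQ_eq: "0 < l \<Longrightarrow> xQ l = [:Xfrac:]"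
  by (simp add: xQ_def Xfrac_def embR_const)

lemma xQ_pow: "0 < l \<Longrightarrow> xQ l [^]\<^bsub>Qring l\<^esub> (k::nat) = [:Xfrac ^ k:]"
  by (simp add: xQ_eq pow_monom_Qring flip: monom_0)

lemma inv_xQ_pow:
  "0 < l \<Longrightarrow> inv\<^bsub>Qring l\<^esub> (xQ l [^]\<^bsub>Qring l\<^esub> (k::nat)) = [:inverse Xfrac ^ k:]"
  by (simp add: xQ_pow inv_const_Qring power_inverse)

lemma yQ_eq: "1 < l \<Longrightarrow> yQ l = monom 1 1"
  by (rule poly_eqI) (simp add: yQ_def coeff_embR coeff_pCons One_fract_def Zero_fract_def
      split: nat.split)

lemma zQ_eq: "1 < l \<Longrightarrow> zQ l n = monom (inverse Xfrac ^ n) 1"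
  by (simp add: zQ_def yQ_eq inv_xQ_pow mult_monom_Qring flip: monom_0)

lemma const_times_zQ_pow:
  assumes "1 < l"
  shows "[:a:] \<otimes>\<^bsub>Qring l\<^esub> zQ l n [^]\<^bsub>Qring l\<^esub> (i::nat) =
    (if i < l then monom (a * inverse Xfrac ^ (n * i)) i else 0)"
proof (cases "i < l")
  case True
  with assms show ?thesis
    by (simp add: zQ_eq pow_monom_Qring mult_monom_Qring flip: monom_0 power_mult)
next
  case False
  with assms show ?thesis by (simp add: zQ_eq pow_monom_Qring Qring_simps)
qed

lemma Salg_eq: assumes l: "1 < l" shows "Salg l n = S_set l n"
proof
  show "Salg l n \<subseteq> S_set l n"
  proof
    fix x assume "x \<in> Salg l n"
    then obtain m d
      where x: "x = finsum (Qring l) (\<lambda>i. d i \<otimes>\<^bsub>Qring l\<^esub> zQ l n [^]\<^bsub>Qring l\<^esub> (i::nat)) {..m}"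
      and d: "\<forall>i. d i \<in> Dsub l"
      unfolding Salg_def by blast
    obtain a where a: "\<And>i. d i = [:a i:]" "\<And>i. a i \<in> Polys"
      using d l by (simp add: Dsub_eq) metis
    let ?A = "{i \<in> {..m}. i < l}"
    have "x = (\<Sum>i\<le>m. if i < l then monom (a i * inverse Xfrac ^ (n * i)) i else 0)"
      unfolding x a(1) using l by (simp add: const_times_zQ_pow finsum_Qring degree_monom_less)
    also have "\<dots> = (\<Sum>i\<in>?A. monom (a i * inverse Xfrac ^ (n * i)) i)"
      by (rule sum.inter_filter[symmetric]) simp
    finally have "coeff x j = (if j \<in> ?A then a j * inverse Xfrac ^ (n * j) else 0)" for j
      by (simp add: coeff_sum_monom)
    then show "x \<in> S_set l n"
      using l a(2) by (auto simp: S_set_def degree_less_iff_coeff_eq_0)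
  qed
next
  show "S_set l n \<subseteq> Salg l n"
  proof
    fix x assume x: "x \<in> S_set l n"
    define d where "d i = [:Xfrac ^ (n * i) * coeff x i:]" for i
    have d: "\<forall>i. d i \<in> Dsub l"
      using x l by (auto simp: Dsub_eq d_def S_set_def)
    have "finsum (Qring l) (\<lambda>i. d i \<otimes>\<^bsub>Qring l\<^esub> zQ l n [^]\<^bsub>Qring l\<^esub> i) {..l - 1}
        = (\<Sum>i\<le>l - 1.
            if i < l then monom (Xfrac ^ (n * i) * coeff x i * inverse Xfrac ^ (n * i)) i else 0)"
      using l by (simp add: d_def const_times_zQ_pow finsum_Qring degree_monom_less)
    also have "\<dots> = (\<Sum>i\<le>l - 1. monom (coeff x i) i)"
      using l by (intro sum.cong) auto
    also have "\<dots> = x"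
      using x by (intro poly_as_sum_of_monoms') (auto simp: S_set_def)
    finally show "x \<in> Salg l n"
      unfolding Salg_def using d by blast
  qed
qed

lemma const_times_yQ_pow_over_xQ_pow:
  "1 < l \<Longrightarrow> i < l \<Longrightarrow>
    [:a:] \<otimes>\<^bsub>Qring l\<^esub> ((yQ l [^]\<^bsub>Qring l\<^esub> (i::nat)) \<otimes>\<^bsub>Qring l\<^esub>
      inv\<^bsub>Qring l\<^esub> (xQ l [^]\<^bsub>Qring l\<^esub> (k::nat)))
      = monom (a * inverse Xfrac ^ k) i"
  by (simp add: yQ_eq inv_xQ_pow pow_monom_Qring mult_monom_Qring flip: monom_0)

lemma finsum_const_times_yQ_pow_over_xQ_pow:
  assumes "1 < l"
  shows "finsum (Qring l) (\<lambda>i. [:a i:] \<otimes>\<^bsub>Qring l\<^esub> ((yQ l [^]\<^bsub>Qring l\<^esub> (i::nat)) \<otimes>\<^bsub>Qring l\<^esub>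
      inv\<^bsub>Qring l\<^esub> (xQ l [^]\<^bsub>Qring l\<^esub> ((i - 1) * n)))) {2..l - 1}
    = (\<Sum>i=2..l - 1. monom (a i * inverse Xfrac ^ ((i - 1) * n)) i)"
    (is "finsum _ ?f _ = _")
proof -
  have "finsum (Qring l) ?f {2..l - 1} = sum ?f {2..l - 1}"
    by (rule finsum_Qring) (use assms in \<open>auto simp: const_times_yQ_pow_over_xQ_pow degree_monom_less\<close>)
  also have "\<dots> = (\<Sum>i=2..l - 1. monom (a i * inverse Xfrac ^ ((i - 1) * n)) i)"
    by (rule sum.cong) (use assms in \<open>auto simp: const_times_yQ_pow_over_xQ_pow\<close>)
  finally show ?thesis .
qed

lemma closure_formula_eq_T_set:
  assumes l: "1 < l"
  shows "{r \<oplus>\<^bsub>Qring l\<^esub> finsum (Qring l)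
           (\<lambda>i. d i \<otimes>\<^bsub>Qring l\<^esub> ((yQ l [^]\<^bsub>Qring l\<^esub> (i::nat)) \<otimes>\<^bsub>Qring l\<^esub>
                 inv\<^bsub>Qring l\<^esub> (xQ l [^]\<^bsub>Qring l\<^esub> ((i - 1) * n)))) {2..l - 1}
        | r d. r \<in> Rsub l \<and> (\<forall>i. d i \<in> Dsub l)} = T_set l n"
    (is "?F = _")
proof
  show "?F \<subseteq> T_set l n"
  proof
    fix x assume "x \<in> ?F"
    then obtain r d where x: "x = r \<oplus>\<^bsub>Qring l\<^esub> finsum (Qring l)
           (\<lambda>i. d i \<otimes>\<^bsub>Qring l\<^esub> ((yQ l [^]\<^bsub>Qring l\<^esub> (i::nat)) \<otimes>\<^bsub>Qring l\<^esub>
                 inv\<^bsub>Qring l\<^esub> (xQ l [^]\<^bsub>Qring l\<^esub> ((i - 1) * n)))) {2..l - 1}"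
      and r: "r \<in> R_set l" and d: "\<forall>i. d i \<in> Dsub l"
      using l by (auto simp: Rsub_eq)
    obtain a where a: "\<And>i. d i = [:a i:]" "\<And>i. a i \<in> Polys"
      using d l by (simp add: Dsub_eq) metis
    have x_eq: "x = r + (\<Sum>i=2..l - 1. monom (a i * inverse Xfrac ^ ((i - 1) * n)) i)"
      unfolding x a(1) Qring_simps(3) finsum_const_times_yQ_pow_over_xQ_pow[OF l] by (rule refl)
    have "degree x < l"
      unfolding x_eq using r l by (auto simp: R_set_def intro!: degree_add_less degree_sum_less degree_monom_less)
    moreover have "Xfrac ^ ((j - 1) * n) * coeff x j \<in> Polys" for j
      using r a(2) by (auto simp: x_eq coeff_sum_monom R_set_def distrib_left intro!: Polys_add Polys_mult Polys_power)
    ultimately show "x \<in> T_set l n" by (simp add: T_set_def)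
  qed
next
  show "T_set l n \<subseteq> ?F"
  proof
    fix x :: "'a poly fract poly" assume x: "x \<in> T_set l n"
    define r where "r = (\<Sum>j<2. monom (coeff x j) j)"
    define d where "d i = [:Xfrac ^ ((i - 1) * n) * coeff x i:]" for i
    have "coeff x j \<in> Polys" if "j < 2" for j
      using x that by (auto simp: T_set_def less_2_cases_iff dest: spec[of _ j])
    then have "r \<in> Rsub l"
      using l by (auto simp: Rsub_eq R_set_def r_def coeff_sum_monom
          intro!: degree_sum_less degree_monom_less)
    moreover have "\<forall>i. d i \<in> Dsub l"
      using x l by (auto simp: Dsub_eq d_def T_set_def)
    moreover have "x = r \<oplus>\<^bsub>Qring l\<^esub> finsum (Qring l)
           (\<lambda>i. d i \<otimes>\<^bsub>Qring l\<^esub> ((yQ l [^]\<^bsub>Qring l\<^esub> (i::nat)) \<otimes>\<^bsub>Qring l\<^esub>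
                 inv\<^bsub>Qring l\<^esub> (xQ l [^]\<^bsub>Qring l\<^esub> ((i - 1) * n)))) {2..l - 1}"
    proof -
      have split: "{..l - 1} = {..<2} \<union> {2..l - 1}" using l by auto
      have "x = (\<Sum>j\<le>l - 1. monom (coeff x j) j)"
        using x by (intro poly_as_sum_of_monoms'[symmetric]) (auto simp: T_set_def)
      also have "\<dots> = r + (\<Sum>i=2..l - 1. monom (coeff x i) i)"
        unfolding split r_def by (rule sum.union_disjoint) auto
      finally show ?thesis
        unfolding d_def Qring_simps(3) finsum_const_times_yQ_pow_over_xQ_pow[OF l] by simp
    qed
    ultimately show "x \<in> ?F" by blast
  qed
qed

section \<open>Integrality and strict closure\<close>

lemma integral_if_const_coeff_in_Polys:
  assumes l: "0 < l" and p: "degree p < l" "coeff p 0 \<in> Polys"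
  shows "p \<in> integral_closure (Qring l) (R_set l)"
proof -
  define c where "c i = [:of_nat (l choose i) * (- coeff p 0) ^ (l - i):]" for i
  have c_R: "\<forall>i<l. c i \<in> R_set l"
    using l p by (auto simp: c_def intro!: const_in_R_set)
  have "p [^]\<^bsub>Qring l\<^esub> l \<oplus>\<^bsub>Qring l\<^esub>
        finsum (Qring l) (\<lambda>i. c i \<otimes>\<^bsub>Qring l\<^esub> p [^]\<^bsub>Qring l\<^esub> i) {..<l}
      = (p ^ l + (\<Sum>i<l. c i * p ^ i)) mod monom 1 l"
    using l by (simp add: finsum_Qring pow_Qring Qring_simps degree_mod_monom_less poly_mod_sum
        poly_mod_add_left mod_mult_right_eq)
  also have "p ^ l + (\<Sum>i<l. c i * p ^ i) = (\<Sum>i\<le>l. c i * p ^ i)"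
    by (simp add: lessThan_Suc_atMost[symmetric] c_def one_pCons)
  also have "\<dots> = (\<Sum>i\<le>l. of_nat (l choose i) * p ^ i * [:- coeff p 0:] ^ (l - i))"
    by (rule sum.cong) (simp_all add: c_def of_nat_poly poly_const_pow mult_ac)
  also have "\<dots> = (p + [:- coeff p 0:]) ^ l"
    by (rule binomial_ring[symmetric])
  also have "(p + [:- coeff p 0:]) ^ l mod monom 1 l = 0"
    by (rule power_mod_monom_eq_0) simp
  finally show ?thesis
    using c_R p by (auto simp: integral_closure_def Qring_simps)
qed

lemma S_set_subset_integral_closure:
  assumes "0 < l" shows "S_set l n \<subseteq> integral_closure (Qring l) (R_set l)"
proof
  fix p assume "p \<in> S_set l n"
  then have "degree p < l" "coeff p 0 \<in> Polys"
    by (simp_all add: S_set_def S_set_coeff_0)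
  then show "p \<in> integral_closure (Qring l) (R_set l)"
    using assms by (intro integral_if_const_coeff_in_Polys) simp_all
qed

definition coeff_pairing ::
    "nat \<Rightarrow> nat \<Rightarrow> 'a::field poly fract poly \<times> 'a poly fract poly \<Rightarrow> 'a poly fract" where "coeff_pairing n j q = Xfrac ^ ((j - 1) * n) * coeff (fst q) j * coeff (snd q) 0"

lemma coeff_pairing_balanced:
  assumes l: "0 < l"
  shows "balanced_modulo (Qring l) (R_set l) (S_set l n) (coeff_pairing n j) Polys"
proof
  fix r s t :: "'a poly fract poly"
  assume r: "r \<in> R_set l" and s: "s \<in> S_set l n" and t: "t \<in> S_set l n"
  show "coeff_pairing n j (r \<otimes>\<^bsub>Qring l\<^esub> s, t) - coeff_pairing n j (s, r \<otimes>\<^bsub>Qring l\<^esub> t) \<in> Polys"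
  proof (cases "j < l")
    case True
    let ?w = "\<lambda>i. Xfrac ^ ((j - 1) * n) * (coeff r i * coeff s (j - i) * coeff t 0)"
    have "{..j} = insert 0 {1..j}" by auto
    then have "(\<Sum>i\<le>j. ?w i) = ?w 0 + (\<Sum>i\<in>{1..j}. ?w i)" by simp
    then have eq: "coeff_pairing n j (r \<otimes>\<^bsub>Qring l\<^esub> s, t) - coeff_pairing n j (s, r \<otimes>\<^bsub>Qring l\<^esub> t)
        = (\<Sum>i\<in>{1..j}. ?w i)"
      using True l by (simp add: coeff_pairing_def Qring_simps coeff_mod_monom coeff_mult
          sum_distrib_left sum_distrib_right mult_ac)
    have mem: "?w i \<in> Polys" if "i \<in> {1..j}" for i
    proof -
      have "Xfrac ^ ((j - 1) * n) = (Xfrac :: 'a poly fract) ^ ((i - 1) * n) * Xfrac ^ (n * (j - i))"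
        using that by (simp flip: power_add add: algebra_simps)
      then have w: "?w i =
          (Xfrac ^ ((i - 1) * n) * coeff r i) * (Xfrac ^ (n * (j - i)) * coeff s (j - i)) * coeff t 0"
        by (simp add: mult_ac)
      have "Xfrac ^ ((i - 1) * n) * coeff r i \<in> Polys"
        using r by (simp add: R_set_def)
      moreover have "Xfrac ^ (n * (j - i)) * coeff s (j - i) \<in> Polys"
        using s by (simp add: S_set_def)
      ultimately show ?thesis
        unfolding w using S_set_coeff_0[OF t] by (rule Polys_mult[OF Polys_mult])
    qed
    show ?thesis unfolding eq by (rule Polys_sum) (rule mem)
  next
    case False
    then show ?thesis
      using s by (simp add: coeff_pairing_def Qring_simps coeff_mod_monom S_set_def coeff_eq_0)
  qed
qed (auto simp: coeff_pairing_def Qring_simps algebra_simps)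

lemma strict_closure_subset_T_set:
  assumes l: "0 < l"
  shows "strict_closure (Qring l) (R_set l) (S_set l n) \<subseteq> T_set l n"
proof
  fix \<alpha> assume \<alpha>: "\<alpha> \<in> strict_closure (Qring l) (R_set l) (S_set l n)"
  then have S: "\<alpha> \<in> S_set l n" by (simp add: strict_closure_def)
  have "Xfrac ^ ((j - 1) * n) * coeff \<alpha> j \<in> Polys" for j
  proof (cases "j = 0")
    case True
    then show ?thesis using S_set_coeff_0[OF S] by simp
  next
    case False
    have "coeff_pairing n j (\<alpha>, \<one>\<^bsub>Qring l\<^esub>) - coeff_pairing n j (\<one>\<^bsub>Qring l\<^esub>, \<alpha>) \<in> Polys"
      using balanced_modulo.strict_closure_lift_mem[OF coeff_pairing_balanced[OF l] \<alpha>] .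
    then show ?thesis using False by (simp add: coeff_pairing_def Qring_simps)
  qed
  then show "\<alpha> \<in> T_set l n" using S by (simp add: S_set_def T_set_def)
qed

lemma R_set_subset_strict_closure:
  assumes l: "0 < l"
  shows "R_set l \<subseteq> strict_closure (Qring l) (R_set l) (S_set l n)"
proof
  fix r assume r: "r \<in> R_set l"
  show "r \<in> strict_closure (Qring l) (R_set l) (S_set l n)"
  proof (rule base_in_strict_closure)
    show "r \<in> R_set l" by fact
    show "r \<in> S_set l n" using r R_set_subset_S_set by blast
    show "\<one>\<^bsub>Qring l\<^esub> \<in> S_set l n" using l by (simp add: Qring_simps one_in_S_set)
    show "r \<otimes>\<^bsub>Qring l\<^esub> \<one>\<^bsub>Qring l\<^esub> = r"
      using r by (simp add: Qring_simps R_set_def mod_monom_eq_self)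
  qed
qed

lemma monom_in_strict_closure:
  assumes l: "1 < l" "j < l" and u: "Xfrac ^ ((j - 1) * n) * u \<in> Polys"
  shows "monom u j \<in> strict_closure (Qring l) (R_set l) (S_set l n)"
proof (cases "j = 0")
  case True
  with u l have "monom u j \<in> R_set l" by (simp add: monom_0 const_in_R_set)
  with l show ?thesis using R_set_subset_strict_closure[of l n] by auto
next
  case False
  define c where "c = Xfrac ^ ((j - 1) * n) * u"
  define z :: "'a poly fract poly" where "z = monom (inverse Xfrac ^ n) 1"
  have l0: "0 < l" using l by simp
  have "[:Xfrac ^ n:] \<otimes>\<^bsub>Qring l\<^esub> [:c:] \<otimes>\<^bsub>Qring l\<^esub> z [^]\<^bsub>Qring l\<^esub> j
      \<in> strict_closure (Qring l) (R_set l) (S_set l n)"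
  proof (rule factor_pow_in_strict_closure)
    show "cring (Qring l)" by (rule Qring_cring[OF l0])
    show "R_set l \<subseteq> S_set l n" by (rule R_set_subset_S_set)
    show "S_set l n \<subseteq> carrier (Qring l)" by (rule S_set_subset_carrier)
    show "\<one>\<^bsub>Qring l\<^esub> \<in> S_set l n" using l0 by (simp add: one_in_S_set Qring_simps)
    show "s \<otimes>\<^bsub>Qring l\<^esub> s' \<in> S_set l n" if "s \<in> S_set l n" "s' \<in> S_set l n" for s s'
      using that l0 by (simp add: Qring_simps S_set_mult)
    have "[:Xfrac ^ n:] \<otimes>\<^bsub>Qring l\<^esub> [:c:] = [:Xfrac ^ n * c:]"
      using l0 by (simp add: mult_monom_Qring flip: monom_0)
    then show "[:Xfrac ^ n:] \<in> R_set l" "[:Xfrac ^ n:] \<otimes>\<^bsub>Qring l\<^esub> [:c:] \<in> R_set l"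
      using l0 u by (simp_all add: c_def const_in_R_set)
    show "[:c:] \<in> S_set l n"
      using const_in_R_set[OF l0 u] R_set_subset_S_set by (auto simp: c_def)
    show "z \<in> S_set l n"
      using l by (simp add: z_def S_set_def degree_monom_less)
    show "[:Xfrac ^ n:] \<otimes>\<^bsub>Qring l\<^esub> z \<in> R_set l"
      using l by (simp add: z_def mult_monom_Qring R_set_def degree_monom_less flip: monom_0)
  qed
  moreover have "[:Xfrac ^ n:] \<otimes>\<^bsub>Qring l\<^esub> [:c:] \<otimes>\<^bsub>Qring l\<^esub> z [^]\<^bsub>Qring l\<^esub> j = monom u j"
  proof -
    have "Xfrac ^ n * c = Xfrac ^ (n * j) * u"
      using False by (simp add: c_def mult.assoc flip: power_add) (simp add: algebra_simps)
    then show ?thesis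
      using l by (simp add: z_def pow_monom_Qring mult_monom_Qring flip: monom_0 power_mult)
  qed
  ultimately show ?thesis by simp
qed

lemma sum_in_strict_closure:
  fixes f :: "'b \<Rightarrow> 'a::field poly fract poly"
  assumes l: "0 < l" and A: "finite A"
    and f: "\<And>i. i \<in> A \<Longrightarrow> f i \<in> strict_closure (Qring l) (R_set l) (S_set l n)"
  shows "sum f A \<in> strict_closure (Qring l) (R_set l) (S_set l n)"
  using A f
proof (induction A rule: finite_induct)
  case empty
  have "(0 :: 'a poly fract poly) \<in> R_set l" using l by (simp add: R_set_def)
  then show ?case using R_set_subset_strict_closure[OF l, of n] by auto
next
  case (insert a A)
  then have "f a \<oplus>\<^bsub>Qring l\<^esub> sum f A \<in> strict_closure (Qring l) (R_set l) (S_set l n)"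
    using l by (intro strict_closure_add)
      (auto simp: Qring_simps one_in_S_set strict_closure_def intro: S_set_add)
  then show ?case using insert by (simp add: Qring_simps)
qed

lemma T_set_subset_strict_closure:
  assumes l: "1 < l"
  shows "T_set l n \<subseteq> strict_closure (Qring l) (R_set l) (S_set l n)"
proof
  fix p assume p: "p \<in> T_set l n"
  have "(\<Sum>j\<le>l - 1. monom (coeff p j) j) \<in> strict_closure (Qring l) (R_set l) (S_set l n)"
    using l p by (intro sum_in_strict_closure monom_in_strict_closure) (auto simp: T_set_def)
  moreover have "(\<Sum>j\<le>l - 1. monom (coeff p j) j) = p"
    using p by (intro poly_as_sum_of_monoms') (auto simp: T_set_def)
  ultimately show "p \<in> strict_closure (Qring l) (R_set l) (S_set l n)" by simp
qed

lemma strict_closure_eq_T_set: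
  "1 < l \<Longrightarrow> strict_closure (Qring l) (R_set l) (S_set l n) = T_set l n"
  using strict_closure_subset_T_set[of l n] T_set_subset_strict_closure[of l n] by auto

theorem mainTheorem9:
  fixes l n :: nat
  assumes "l \<ge> 3" and "n > 0"
  shows "(Rsub l :: 'k::field poly fract poly set) \<subseteq> Salg l n
    \<and> (Salg l n :: 'k poly fract poly set) \<subseteq> integral_closure (Qring l) (Rsub l)
    \<and> strict_closure (Qring l) (Rsub l) (Salg l n :: 'k poly fract poly set) =
       {r \<oplus>\<^bsub>Qring l\<^esub> finsum (Qring l)
           (\<lambda>i. d i \<otimes>\<^bsub>Qring l\<^esub> ((yQ l [^]\<^bsub>Qring l\<^esub> (i::nat)) \<otimes>\<^bsub>Qring l\<^esub>
                 inv\<^bsub>Qring l\<^esub> (xQ l [^]\<^bsub>Qring l\<^esub> ((i - 1) * n)))) {2..l - 1}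
        | r d. r \<in> Rsub l \<and> (\<forall>i. d i \<in> Dsub l)}"
proof -
  have l: "0 < l" "1 < l" using assms(1) by auto
  show ?thesis
    unfolding closure_formula_eq_T_set[OF l(2)]
    unfolding Rsub_eq[OF l(1)] Salg_eq[OF l(2)] strict_closure_eq_T_set[OF l(2)]
    using R_set_subset_S_set S_set_subset_integral_closure[OF l(1)] by blast
qed

end
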